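(* Let $d,k\geq 2$ and $\epsilon\geq 1$, and let $G$ be a diregular $(d,k,+\epsilon)$-digraph. Then for every vertex $u$ of $G$, the multisets $O(N^+(u))$ and $N^+(O(u))$ are equal.
   Context: A digraph is $k$-geodetic if for every ordered pair of vertices $x,y$ there is at most one directed path from $x$ to $y$ of length at most $k$ (the trivial path of length $0$ counts). $M(d,k)=1+d+\dots+d^k$. A diregular $(d,k,+\epsilon)$-digraph is a $k$-geodetic digraph of order $M(d,k)+\epsilon$ in which every vertex has in-degree and out-degree exactly $d$. $N^+(x)$ is the set of out-neighbours of $x$; $d(x,y)$ is the directed distance; the outlier set of $x$ is $O(x)=\{y: d(x,y)\geq k+1\}$ (it has exactly $\epsilon$ elements). For a set $S$ of vertices, $N^+(S)$ denotes the multiset union $\biguplus_{x\in S}N^+(x)$ and $O(S)$ denotes the multiset union $\biguplus_{x\in S}O(x)$. *)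

theory Defs
  imports Main "HOL-Library.Multiset"
begin

text \<open>A walk is a nonempty list of vertices, consecutive ones joined by arcs; its length is
the number of arcs, i.e. length minus one.\<close>

definition is_walk :: "'a set \<Rightarrow> ('a \<Rightarrow> 'a \<Rightarrow> bool) \<Rightarrow> 'a list \<Rightarrow> bool" where
  "is_walk V E xs \<longleftrightarrow> xs \<noteq> [] \<and> set xs \<subseteq> V \<and>
     (\<forall>i. Suc i < length xs \<longrightarrow> E (xs ! i) (xs ! Suc i))"

definition walk_from_to :: "'a set \<Rightarrow> ('a \<Rightarrow> 'a \<Rightarrow> bool) \<Rightarrow> 'a \<Rightarrow> 'a \<Rightarrow> 'a list \<Rightarrow> bool" where
  "walk_from_to V E x y xs \<longleftrightarrow> is_walk V E xs \<and> hd xs = x \<and> last xs = y"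

definition k_geodetic :: "'a set \<Rightarrow> ('a \<Rightarrow> 'a \<Rightarrow> bool) \<Rightarrow> nat \<Rightarrow> bool" where
  "k_geodetic V E k \<longleftrightarrow> (\<forall>x\<in>V. \<forall>y\<in>V. \<forall>p q.
      walk_from_to V E x y p \<and> length p \<le> k + 1 \<and>
      walk_from_to V E x y q \<and> length q \<le> k + 1 \<longrightarrow> p = q)"

definition out_nbrs :: "'a set \<Rightarrow> ('a \<Rightarrow> 'a \<Rightarrow> bool) \<Rightarrow> 'a \<Rightarrow> 'a set" where
  "out_nbrs V E x = {y \<in> V. E x y}"

definition in_nbrs :: "'a set \<Rightarrow> ('a \<Rightarrow> 'a \<Rightarrow> bool) \<Rightarrow> 'a \<Rightarrow> 'a set" where
  "in_nbrs V E x = {y \<in> V. E y x}"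

text \<open>Outlier set: vertices at directed distance at least k+1 (including unreachable ones).\<close>
definition outliers :: "'a set \<Rightarrow> ('a \<Rightarrow> 'a \<Rightarrow> bool) \<Rightarrow> nat \<Rightarrow> 'a \<Rightarrow> 'a set" where
  "outliers V E k x = {y \<in> V. \<not> (\<exists>p. walk_from_to V E x y p \<and> length p \<le> k + 1)}"

definition moore_bound :: "nat \<Rightarrow> nat \<Rightarrow> nat" where
  "moore_bound d k = (\<Sum>i\<le>k. d ^ i)"

definition diregular_dke :: "'a set \<Rightarrow> ('a \<Rightarrow> 'a \<Rightarrow> bool) \<Rightarrow> nat \<Rightarrow> nat \<Rightarrow> nat \<Rightarrow> bool" where
  "diregular_dke V E d k \<epsilon> \<longleftrightarrow>
     finite V \<and> (\<forall>x y. E x y \<longrightarrow> x \<in> V \<and> y \<in> V) \<and>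
     k_geodetic V E k \<and> card V = moore_bound d k + \<epsilon> \<and>
     (\<forall>x\<in>V. card (out_nbrs V E x) = d \<and> card (in_nbrs V E x) = d)"

definition out_nbrs_mset :: "'a set \<Rightarrow> ('a \<Rightarrow> 'a \<Rightarrow> bool) \<Rightarrow> 'a set \<Rightarrow> 'a multiset" where
  "out_nbrs_mset V E S = (\<Sum>x\<in>S. mset_set (out_nbrs V E x))"

definition outliers_mset :: "'a set \<Rightarrow> ('a \<Rightarrow> 'a \<Rightarrow> bool) \<Rightarrow> nat \<Rightarrow> 'a set \<Rightarrow> 'a multiset" where
  "outliers_mset V E k S = (\<Sum>x\<in>S. mset_set (outliers V E k x))"

end

theory Submission
  imports Defs
begin

text \<open>Fix vertices u and v and count the walks from u to v of length between 1 and k+1.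
By k-geodeticity such a walk is determined both by its second vertex, an out-neighbour x
of u that reaches v within k steps, and by its penultimate vertex, an in-neighbour w of v
reached from u within k steps. Hence the out-neighbours of u having v as an outlier and the
outliers of u having v as an out-neighbour are equally many: the d out-neighbours of u,
resp. the d in-neighbours of v, minus the number of these walks. This is exactly the
multiplicity of v on the two sides.\<close>

definition reaches_within :: "'a set \<Rightarrow> ('a \<Rightarrow> 'a \<Rightarrow> bool) \<Rightarrow> nat \<Rightarrow> 'a \<Rightarrow> 'a \<Rightarrow> bool" where
  "reaches_within V E k x y \<longleftrightarrow> (\<exists>p. walk_from_to V E x y p \<and> length p \<le> k + 1)"

definition short_walks :: "'a set \<Rightarrow> ('a \<Rightarrow> 'a \<Rightarrow> bool) \<Rightarrow> nat \<Rightarrow> 'a \<Rightarrow> 'a \<Rightarrow> 'a list set" where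
  "short_walks V E k u v = {p. walk_from_to V E u v p \<and> 2 \<le> length p \<and> length p \<le> k + 2}"

lemma outliers_eq_not_reaches_within:
  "outliers V E k x = {y \<in> V. \<not> reaches_within V E k x y}"
  by (simp add: outliers_def reaches_within_def)

lemma is_walk_Cons:
  "xs \<noteq> [] \<Longrightarrow> is_walk V E (x # xs) \<longleftrightarrow> x \<in> V \<and> E x (hd xs) \<and> is_walk V E xs"
  unfolding is_walk_def by (auto simp: hd_conv_nth nth_Cons split: nat.splits)

lemma is_walk_snoc:
  assumes "xs \<noteq> []"
  shows "is_walk V E (xs @ [y]) \<longleftrightarrow> is_walk V E xs \<and> E (last xs) y \<and> y \<in> V"
proof -
  have "i = length xs - 1" if "Suc i < Suc (length xs)" "\<not> Suc i < length xs" for i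
    using that by linarith
  then show ?thesis
    using assms unfolding is_walk_def by (auto simp: last_conv_nth nth_append)
qed

lemma walk_from_to_endpoints_in:
  "walk_from_to V E x y p \<Longrightarrow> x \<in> V \<and> y \<in> V"
  unfolding walk_from_to_def is_walk_def using hd_in_set last_in_set by blast

lemma k_geodetic_walk_unique:
  assumes "k_geodetic V E k"
    and "walk_from_to V E x y p" "length p \<le> k + 1"
    and "walk_from_to V E x y q" "length q \<le> k + 1"
  shows "p = q"
  using assms walk_from_to_endpoints_in[OF assms(2)] unfolding k_geodetic_def by blast

lemma short_walk_Cons_iff:
  "u # p \<in> short_walks V E k u v \<longleftrightarrow>
     u \<in> V \<and> p \<noteq> [] \<and> E u (hd p) \<and> walk_from_to V E (hd p) v p \<and> length p \<le> k + 1"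
  unfolding short_walks_def walk_from_to_def
  by (cases p) (auto simp: is_walk_Cons)

lemma short_walk_snoc_iff:
  "p @ [v] \<in> short_walks V E k u v \<longleftrightarrow>
     v \<in> V \<and> p \<noteq> [] \<and> E (last p) v \<and> walk_from_to V E u (last p) p \<and> length p \<le> k + 1"
  unfolding short_walks_def walk_from_to_def
  by (cases "p = []") (auto simp: is_walk_snoc Suc_le_eq)

lemma short_walk_obtain_Cons:
  assumes "p \<in> short_walks V E k u v"
  obtains p' where "p = u # p'"
  using assms unfolding short_walks_def walk_from_to_def by (cases p) auto

lemma short_walk_obtain_snoc:
  assumes "p \<in> short_walks V E k u v"
  obtains p' where "p = p' @ [v]"
  using assms unfolding short_walks_def walk_from_to_def by (cases p rule: rev_cases) auto

lemma bij_betw_short_walks_out_nbrs: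
  assumes "k_geodetic V E k" and "u \<in> V"
  shows "bij_betw (\<lambda>p. hd (tl p)) (short_walks V E k u v)
           {x \<in> out_nbrs V E u. reaches_within V E k x v}"
proof (rule bij_betwI')
  fix p q assume p: "p \<in> short_walks V E k u v" and q: "q \<in> short_walks V E k u v"
  obtain p' q' where "p = u # p'" "q = u # q'"
    using p q by (auto elim!: short_walk_obtain_Cons)
  with p q show "hd (tl p) = hd (tl q) \<longleftrightarrow> p = q"
    using k_geodetic_walk_unique[OF assms(1), of "hd p'" v p' q']
    by (auto simp: short_walk_Cons_iff)
next
  fix p assume p: "p \<in> short_walks V E k u v"
  then obtain p' where "p = u # p'" by (rule short_walk_obtain_Cons)
  with p show "hd (tl p) \<in> {x \<in> out_nbrs V E u. reaches_within V E k x v}"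
    by (auto dest: walk_from_to_endpoints_in
        simp: short_walk_Cons_iff out_nbrs_def reaches_within_def)
next
  fix x assume "x \<in> {x \<in> out_nbrs V E u. reaches_within V E k x v}"
  then obtain p where "walk_from_to V E x v p" "length p \<le> k + 1" "E u x"
    unfolding out_nbrs_def reaches_within_def by auto
  moreover from this have "p \<noteq> []" "hd p = x"
    unfolding walk_from_to_def is_walk_def by auto
  ultimately have "u # p \<in> short_walks V E k u v" "x = hd (tl (u # p))"
    using assms(2) by (auto simp: short_walk_Cons_iff)
  then show "\<exists>p \<in> short_walks V E k u v. x = hd (tl p)" by blast
qed

lemma bij_betw_short_walks_in_nbrs:
  assumes "k_geodetic V E k" and "v \<in> V"
  shows "bij_betw (\<lambda>p. last (butlast p)) (short_walks V E k u v)
           {w \<in> in_nbrs V E v. reaches_within V E k u w}"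
proof (rule bij_betwI')
  fix p q assume p: "p \<in> short_walks V E k u v" and q: "q \<in> short_walks V E k u v"
  obtain p' q' where "p = p' @ [v]" "q = q' @ [v]"
    using p q by (auto elim!: short_walk_obtain_snoc)
  with p q show "last (butlast p) = last (butlast q) \<longleftrightarrow> p = q"
    using k_geodetic_walk_unique[OF assms(1), of u "last p'" p' q']
    by (auto simp: short_walk_snoc_iff)
next
  fix p assume p: "p \<in> short_walks V E k u v"
  then obtain p' where "p = p' @ [v]" by (rule short_walk_obtain_snoc)
  with p show "last (butlast p) \<in> {w \<in> in_nbrs V E v. reaches_within V E k u w}"
    by (auto dest: walk_from_to_endpoints_in
        simp: short_walk_snoc_iff in_nbrs_def reaches_within_def)
next
  fix w assume "w \<in> {w \<in> in_nbrs V E v. reaches_within V E k u w}"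
  then obtain p where "walk_from_to V E u w p" "length p \<le> k + 1" "E w v"
    unfolding in_nbrs_def reaches_within_def by auto
  moreover from this have "p \<noteq> []" "last p = w"
    unfolding walk_from_to_def is_walk_def by auto
  ultimately have "p @ [v] \<in> short_walks V E k u v" "w = last (butlast (p @ [v]))"
    using assms(2) by (auto simp: short_walk_snoc_iff)
  then show "\<exists>p \<in> short_walks V E k u v. w = last (butlast p)" by blast
qed

lemma card_out_nbrs_with_outlier:
  assumes "finite V" "k_geodetic V E k" "u \<in> V" "v \<in> V"
  shows "card {x \<in> out_nbrs V E u. v \<in> outliers V E k x}
           = card (out_nbrs V E u) - card (short_walks V E k u v)"
proof -
  let ?A = "{x \<in> out_nbrs V E u. reaches_within V E k x v}"
  have "{x \<in> out_nbrs V E u. v \<in> outliers V E k x} = out_nbrs V E u - ?A"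
    using assms(4) by (auto simp: outliers_eq_not_reaches_within)
  moreover have "finite (out_nbrs V E u)"
    using assms(1) by (simp add: out_nbrs_def)
  moreover have "card ?A = card (short_walks V E k u v)"
    using bij_betw_same_card[OF bij_betw_short_walks_out_nbrs[OF assms(2,3)]] by simp
  ultimately show ?thesis
    by (simp add: card_Diff_subset)
qed

lemma card_outliers_with_out_nbr:
  assumes "finite V" "k_geodetic V E k" "v \<in> V"
  shows "card {w \<in> outliers V E k u. v \<in> out_nbrs V E w}
           = card (in_nbrs V E v) - card (short_walks V E k u v)"
proof -
  let ?B = "{w \<in> in_nbrs V E v. reaches_within V E k u w}"
  have "{w \<in> outliers V E k u. v \<in> out_nbrs V E w} = in_nbrs V E v - ?B"
    using assms(3) by (auto simp: outliers_eq_not_reaches_within out_nbrs_def in_nbrs_def)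
  moreover have "finite (in_nbrs V E v)"
    using assms(1) by (simp add: in_nbrs_def)
  moreover have "card ?B = card (short_walks V E k u v)"
    using bij_betw_same_card[OF bij_betw_short_walks_in_nbrs[OF assms(2,3)]] by simp
  ultimately show ?thesis
    by (simp add: card_Diff_subset)
qed

lemma count_sum_mset_set:
  assumes "finite S" "\<And>x. x \<in> S \<Longrightarrow> finite (F x)"
  shows "count (\<Sum>x\<in>S. mset_set (F x)) v = card {x \<in> S. v \<in> F x}"
proof -
  have "count (\<Sum>x\<in>S. mset_set (F x)) v = (\<Sum>x\<in>S. if v \<in> F x then 1 else 0)"
    using assms by (auto simp: count_sum count_mset_set intro: sum.cong)
  also have "\<dots> = card {x \<in> S. v \<in> F x}"
    using assms(1) by (simp add: sum.inter_filter[symmetric])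
  finally show ?thesis .
qed

theorem lemma1:
  fixes V :: "'a set" and E :: "'a \<Rightarrow> 'a \<Rightarrow> bool" and d k \<epsilon> :: nat
  assumes "d \<ge> 2" and "k \<ge> 2" and "\<epsilon> \<ge> 1"
    and "diregular_dke V E d k \<epsilon>"
    and "u \<in> V"
  shows "outliers_mset V E k (out_nbrs V E u) = out_nbrs_mset V E (outliers V E k u)"
proof (rule multiset_eqI)
  fix v
  from assms(4) have fin: "finite V" and geo: "k_geodetic V E k"
    and deg: "\<And>x. x \<in> V \<Longrightarrow> card (out_nbrs V E x) = d \<and> card (in_nbrs V E x) = d"
    unfolding diregular_dke_def by auto
  have "finite (out_nbrs V E x)" "finite (outliers V E k x)" for x
    using fin by (simp_all add: out_nbrs_def outliers_def)
  then have "count (outliers_mset V E k (out_nbrs V E u)) v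
               = card {x \<in> out_nbrs V E u. v \<in> outliers V E k x}"
        and "count (out_nbrs_mset V E (outliers V E k u)) v
               = card {w \<in> outliers V E k u. v \<in> out_nbrs V E w}"
    by (simp_all add: outliers_mset_def out_nbrs_mset_def count_sum_mset_set)
  moreover have "card {x \<in> out_nbrs V E u. v \<in> outliers V E k x}
                   = card {w \<in> outliers V E k u. v \<in> out_nbrs V E w}"
  proof (cases "v \<in> V")
    case True
    then show ?thesis
      using assms(5) deg fin geo by (simp add: card_out_nbrs_with_outlier card_outliers_with_out_nbr)
  next
    case False
    then show ?thesis by (simp add: outliers_def out_nbrs_def)
  qed
  ultimately show "count (outliers_mset V E k (out_nbrs V E u)) v
                     = count (out_nbrs_mset V E (outliers V E k u)) v"
    by simp
qed

end
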